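(* Let $n=5$, $I_1=\{1,2,3,4\}$, $I_2=\{1,2,3,5\}$, and $f=f_1+f_2$ with $$f_1=x_4^2(x_1^4x_2^2+x_2^4x_3^2+x_1^2x_3^4-3x_1^2x_2^2x_3^2)+x_3^8,\qquad f_2=x_1^2x_2^2x_3^2x_5^2.$$ Let $H_1:=(x_1^2+x_2^2+x_3^2+x_4^2)(x_1^2+x_2^2+x_3^2)$ and $H_2:=(x_1^2+x_2^2+x_3^2+x_5^2)(x_1^2+x_2^2+x_3^2)$. Then: (1) $f$ is a nonnegative form of degree $8$ which is not positive definite; (2) there are no $\sigma_1\in\Sigma[x(I_1)]$, $\sigma_2\in\Sigma[x(I_2)]$ with $f=\sigma_1+\sigma_2$; but there exist $\sigma_1\in\Sigma[x(I_1)]_6$, $\sigma_2\in\Sigma[x(I_2)]_6$ with $f=\sigma_1/H_1+\sigma_2/H_2$.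
   Context: For $T\subseteq\{1,\dots,n\}$, $x(T)=(x_i)_{i\in T}$; $\Sigma[x(T)]$ is the set of sums of squares of polynomials in the variables $x(T)$, and $\Sigma[x(T)]_t$ those sums of squares of polynomials of degree at most $t$. A form is positive definite if it is positive at every nonzero point. *)

theory Defs
  imports Complex_Main
begin

text \<open>Points are functions nat => real; variable x_i is x i. Polynomials are
represented as polynomial functions (faithful over the infinite field R).\<close>

definition poly_deg_in :: "nat set \<Rightarrow> nat \<Rightarrow> ((nat \<Rightarrow> real) \<Rightarrow> real) \<Rightarrow> bool" where
  "poly_deg_in T t p \<longleftrightarrow> (\<exists>A c. finite A \<and>
      (\<forall>\<alpha>\<in>A. (\<forall>i. i \<notin> T \<longrightarrow> \<alpha> i = 0) \<and> (\<Sum>i\<in>T. \<alpha> i) \<le> t) \<and>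
      (\<forall>x. p x = (\<Sum>\<alpha>\<in>A. c \<alpha> * (\<Prod>i\<in>T. x i ^ \<alpha> i))))"

definition poly_in :: "nat set \<Rightarrow> ((nat \<Rightarrow> real) \<Rightarrow> real) \<Rightarrow> bool" where
  "poly_in T p \<longleftrightarrow> (\<exists>t. poly_deg_in T t p)"

definition sos_in :: "nat set \<Rightarrow> ((nat \<Rightarrow> real) \<Rightarrow> real) \<Rightarrow> bool" where
  "sos_in T \<sigma> \<longleftrightarrow> (\<exists>ps. (\<forall>p\<in>set ps. poly_in T p) \<and> (\<forall>x. \<sigma> x = (\<Sum>p\<leftarrow>ps. (p x)\<^sup>2)))"

definition sos_deg_in :: "nat set \<Rightarrow> nat \<Rightarrow> ((nat \<Rightarrow> real) \<Rightarrow> real) \<Rightarrow> bool" where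
  "sos_deg_in T t \<sigma> \<longleftrightarrow> (\<exists>ps. (\<forall>p\<in>set ps. poly_deg_in T t p) \<and> (\<forall>x. \<sigma> x = (\<Sum>p\<leftarrow>ps. (p x)\<^sup>2)))"

definition form_of_degree :: "nat set \<Rightarrow> nat \<Rightarrow> ((nat \<Rightarrow> real) \<Rightarrow> real) \<Rightarrow> bool" where
  "form_of_degree V d p \<longleftrightarrow> (\<exists>x. p x \<noteq> 0) \<and> (\<exists>A c. finite A \<and>
      (\<forall>\<alpha>\<in>A. (\<forall>i. i \<notin> V \<longrightarrow> \<alpha> i = 0) \<and> (\<Sum>i\<in>V. \<alpha> i) = d) \<and>
      (\<forall>x. p x = (\<Sum>\<alpha>\<in>A. c \<alpha> * (\<Prod>i\<in>V. x i ^ \<alpha> i))))"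

definition nonneg_form :: "((nat \<Rightarrow> real) \<Rightarrow> real) \<Rightarrow> bool" where
  "nonneg_form p \<longleftrightarrow> (\<forall>x. p x \<ge> 0)"

definition pos_def_form :: "nat set \<Rightarrow> ((nat \<Rightarrow> real) \<Rightarrow> real) \<Rightarrow> bool" where
  "pos_def_form V p \<longleftrightarrow> (\<forall>x. (\<exists>i\<in>V. x i \<noteq> 0) \<longrightarrow> p x > 0)"

definition f1 :: "(nat \<Rightarrow> real) \<Rightarrow> real" where
  "f1 x = (x 4)\<^sup>2 * ((x 1)^4 * (x 2)^2 + (x 2)^4 * (x 3)^2 + (x 1)^2 * (x 3)^4
            - 3 * (x 1)^2 * (x 2)^2 * (x 3)^2) + (x 3)^8"

definition f2 :: "(nat \<Rightarrow> real) \<Rightarrow> real" where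
  "f2 x = (x 1)^2 * (x 2)^2 * (x 3)^2 * (x 5)^2"

definition f :: "(nat \<Rightarrow> real) \<Rightarrow> real" where
  "f x = f1 x + f2 x"

definition H1 :: "(nat \<Rightarrow> real) \<Rightarrow> real" where
  "H1 x = ((x 1)^2 + (x 2)^2 + (x 3)^2 + (x 4)^2) * ((x 1)^2 + (x 2)^2 + (x 3)^2)"

definition H2 :: "(nat \<Rightarrow> real) \<Rightarrow> real" where
  "H2 x = ((x 1)^2 + (x 2)^2 + (x 3)^2 + (x 5)^2) * ((x 1)^2 + (x 2)^2 + (x 3)^2)"

end

theory Submission
  imports Defs "HOL-Computational_Algebra.Polynomial"
begin

text \<open>Write \<open>S(u,v,w) = u\<^sup>4v\<^sup>2 + v\<^sup>4w\<^sup>2 + u\<^sup>2w\<^sup>4 - 3u\<^sup>2v\<^sup>2w\<^sup>2\<close> for the Choi--Lam form, so that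
\<open>f\<^sub>1 = x\<^sub>4\<^sup>2 S(x\<^sub>1,x\<^sub>2,x\<^sub>3) + x\<^sub>3\<^sup>8\<close>. Nonnegativity of \<open>f\<close> and the rational certificate both come
from the identity expressing \<open>(u\<^sup>2+v\<^sup>2+w\<^sup>2) S\<close> as a sum of squares.

For the obstruction, suppose \<open>f = \<sigma>\<^sub>1 + \<sigma>\<^sub>2\<close>. Setting \<open>x\<^sub>5 = 0\<close> gives \<open>\<sigma>\<^sub>1 \<le> f\<^sub>1\<close>, and as \<open>f\<^sub>1\<close> is
quadratic in \<open>x\<^sub>4\<close>, every polynomial \<open>p\<close> squared in \<open>\<sigma>\<^sub>1\<close> is affine in \<open>x\<^sub>4\<close>, with slope \<open>b\<^sub>p\<close> a
polynomial in \<open>x\<^sub>1,x\<^sub>2,x\<^sub>3\<close>. Since \<open>\<sigma>\<^sub>2\<close> does not involve \<open>x\<^sub>4\<close>, comparing second differences in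
\<open>x\<^sub>4\<close> yields \<open>S = \<Sum> b\<^sub>p\<^sup>2\<close>. But a polynomial \<open>F\<close> with \<open>F\<^sup>2 \<le> S\<close> vanishes: scaling shows that \<open>F\<close> is
a cubic form, and evaluating at the zeros of \<open>S\<close> kills its ten coefficients. Hence \<open>S = 0\<close>,
which is absurd.\<close>

section \<open>Polynomial functions given by monomial lists\<close>

text \<open>A list rather than a finite set of monomials, so that sums and products need no
collecting of like terms.\<close>
definition poly_degs_in :: "nat set \<Rightarrow> nat set \<Rightarrow> ((nat \<Rightarrow> real) \<Rightarrow> real) \<Rightarrow> bool" where
  "poly_degs_in T D p \<longleftrightarrow> (\<exists>L::(real \<times> (nat \<Rightarrow> nat)) list.
     (\<forall>ce\<in>set L. (\<forall>i. i \<notin> T \<longrightarrow> snd ce i = 0) \<and> sum (snd ce) T \<in> D) \<and>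
     (\<forall>x. p x = (\<Sum>ce\<leftarrow>L. fst ce * (\<Prod>i\<in>T. x i ^ snd ce i))))"

lemma poly_degs_in_const: "poly_degs_in T {0} (\<lambda>x. c)"
  unfolding poly_degs_in_def
  by (rule exI[of _ "[(c, \<lambda>i. 0)]"]) auto

lemma poly_degs_in_var:
  assumes "i \<in> T" "finite T"
  shows "poly_degs_in T {1} (\<lambda>x. x i)"
  unfolding poly_degs_in_def
proof (rule exI[of _ "[(1, \<lambda>j. if j = i then 1 else 0)]"], intro conjI allI ballI)
  fix x :: "nat \<Rightarrow> real"
  have "(\<Prod>j\<in>T. x j ^ (if j = i then 1 else 0)) = (\<Prod>j\<in>T. if j = i then x j else 1)"
    by (rule prod.cong) auto
  also have "\<dots> = x i" using assms by (simp add: prod.delta)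
  finally show "x i = (\<Sum>ce\<leftarrow>[(1::real, \<lambda>j. if j = i then 1 else 0)]. fst ce * (\<Prod>i\<in>T. x i ^ snd ce i))"
    by simp
qed (use assms in \<open>auto simp: sum.delta\<close>)

lemma poly_degs_in_add:
  assumes "poly_degs_in T D p" "poly_degs_in T D q"
  shows "poly_degs_in T D (\<lambda>x. p x + q x)"
proof -
  obtain L1 where "\<forall>ce\<in>set L1. (\<forall>i. i \<notin> T \<longrightarrow> snd ce i = 0) \<and> sum (snd ce) T \<in> D"
    "\<forall>x. p x = (\<Sum>ce\<leftarrow>L1. fst ce * (\<Prod>i\<in>T. x i ^ snd ce i))"
    using assms(1) unfolding poly_degs_in_def by blast
  moreover obtain L2 where "\<forall>ce\<in>set L2. (\<forall>i. i \<notin> T \<longrightarrow> snd ce i = 0) \<and> sum (snd ce) T \<in> D"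
    "\<forall>x. q x = (\<Sum>ce\<leftarrow>L2. fst ce * (\<Prod>i\<in>T. x i ^ snd ce i))"
    using assms(2) unfolding poly_degs_in_def by blast
  ultimately show ?thesis
    unfolding poly_degs_in_def by (intro exI[of _ "L1 @ L2"]) auto
qed

lemma poly_degs_in_cmult:
  assumes "poly_degs_in T D p"
  shows "poly_degs_in T D (\<lambda>x. a * p x)"
proof -
  obtain L where "\<forall>ce\<in>set L. (\<forall>i. i \<notin> T \<longrightarrow> snd ce i = 0) \<and> sum (snd ce) T \<in> D"
    "\<forall>x. p x = (\<Sum>ce\<leftarrow>L. fst ce * (\<Prod>i\<in>T. x i ^ snd ce i))"
    using assms unfolding poly_degs_in_def by blast
  then show ?thesis
    unfolding poly_degs_in_def
    by (intro exI[of _ "map (\<lambda>ce. (a * fst ce, snd ce)) L"])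
      (auto simp: o_def sum_list_const_mult[symmetric] mult.assoc)
qed

lemma poly_degs_in_diff:
  assumes "poly_degs_in T D p" "poly_degs_in T D q"
  shows "poly_degs_in T D (\<lambda>x. p x - q x)"
  using poly_degs_in_add[OF assms(1) poly_degs_in_cmult[OF assms(2), of "-1"]] by simp

lemma poly_degs_in_divide:
  assumes "poly_degs_in T D p"
  shows "poly_degs_in T D (\<lambda>x. p x / c)"
  using poly_degs_in_cmult[OF assms, of "1/c"] by simp

lemma sum_list_mult_sum_list:
  fixes f :: "'a \<Rightarrow> real" and g :: "'b \<Rightarrow> real"
  shows "(\<Sum>a\<leftarrow>A. f a) * (\<Sum>b\<leftarrow>B. g b) = (\<Sum>a\<leftarrow>A. \<Sum>b\<leftarrow>B. f a * g b)"
  by (induction A) (auto simp: algebra_simps sum_list_const_mult)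

lemma sum_list_concat_map_map:
  "(\<Sum>ce\<leftarrow>concat (map (\<lambda>c1. map (m c1) L2) L1). k ce) = (\<Sum>c1\<leftarrow>L1. \<Sum>c2\<leftarrow>L2. (k (m c1 c2)::real))"
  by (induction L1) (auto simp: o_def)

lemma poly_degs_in_mult:
  assumes "poly_degs_in T {a} p" "poly_degs_in T {b} q" "c = a + b"
  shows "poly_degs_in T {c} (\<lambda>x. p x * q x)"
proof -
  obtain L1 where L1: "\<forall>ce\<in>set L1. (\<forall>i. i \<notin> T \<longrightarrow> snd ce i = 0) \<and> sum (snd ce) T \<in> {a}"
    "\<forall>x. p x = (\<Sum>ce\<leftarrow>L1. fst ce * (\<Prod>i\<in>T. x i ^ snd ce i))"
    using assms(1) unfolding poly_degs_in_def by blast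
  obtain L2 where L2: "\<forall>ce\<in>set L2. (\<forall>i. i \<notin> T \<longrightarrow> snd ce i = 0) \<and> sum (snd ce) T \<in> {b}"
    "\<forall>x. q x = (\<Sum>ce\<leftarrow>L2. fst ce * (\<Prod>i\<in>T. x i ^ snd ce i))"
    using assms(2) unfolding poly_degs_in_def by blast
  define L where
    "L = concat (map (\<lambda>c1. map (\<lambda>c2. (fst c1 * fst c2, \<lambda>i. snd c1 i + snd c2 i)) L2) L1)"
  show ?thesis unfolding poly_degs_in_def
  proof (rule exI[of _ L], intro conjI allI)
    show "\<forall>ce\<in>set L. (\<forall>i. i \<notin> T \<longrightarrow> snd ce i = 0) \<and> sum (snd ce) T \<in> {c}"
      using L1(1) L2(1) assms(3) unfolding L_def by (auto simp: sum.distrib)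
  next
    fix x :: "nat \<Rightarrow> real"
    have "p x * q x = (\<Sum>c1\<leftarrow>L1. \<Sum>c2\<leftarrow>L2.
        (fst c1 * (\<Prod>i\<in>T. x i ^ snd c1 i)) * (fst c2 * (\<Prod>i\<in>T. x i ^ snd c2 i)))"
      using L1(2) L2(2) by (simp add: sum_list_mult_sum_list)
    also have "\<dots> = (\<Sum>c1\<leftarrow>L1. \<Sum>c2\<leftarrow>L2. fst c1 * fst c2 * (\<Prod>i\<in>T. x i ^ (snd c1 i + snd c2 i)))"
      by (simp add: power_add prod.distrib algebra_simps)
    also have "\<dots> = (\<Sum>ce\<leftarrow>L. fst ce * (\<Prod>i\<in>T. x i ^ snd ce i))"
      unfolding L_def sum_list_concat_map_map by simp
    finally show "p x * q x = (\<Sum>ce\<leftarrow>L. fst ce * (\<Prod>i\<in>T. x i ^ snd ce i))" .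
  qed
qed

lemma poly_degs_in_power:
  assumes "poly_degs_in T {a} p" "c = n * a"
  shows "poly_degs_in T {c} (\<lambda>x. p x ^ n)"
  unfolding assms(2)
proof (induction n)
  case 0
  then show ?case using poly_degs_in_const[of T 1] by simp
next
  case (Suc n)
  then show ?case using poly_degs_in_mult[OF assms(1) Suc] by simp
qed

lemmas poly_degs_in_intros = poly_degs_in_add poly_degs_in_diff poly_degs_in_mult
  poly_degs_in_power poly_degs_in_var poly_degs_in_const poly_degs_in_divide

lemma sum_sum_list_swap:
  "(\<Sum>a\<in>A. \<Sum>ce\<leftarrow>L. g a ce) = (\<Sum>ce\<leftarrow>L. \<Sum>a\<in>A. (g a ce :: real))"
  by (induction L) (auto simp: sum.distrib)

lemma poly_degs_in_imp_finite_expansion: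
  assumes "poly_degs_in T D p"
  shows "\<exists>A c. finite A \<and> (\<forall>\<alpha>\<in>A. (\<forall>i. i \<notin> T \<longrightarrow> \<alpha> i = 0) \<and> sum \<alpha> T \<in> D) \<and>
      (\<forall>x. p x = (\<Sum>\<alpha>\<in>A. c \<alpha> * (\<Prod>i\<in>T. x i ^ \<alpha> i)))"
proof -
  obtain L where L: "\<forall>ce\<in>set L. (\<forall>i. i \<notin> T \<longrightarrow> snd ce i = 0) \<and> sum (snd ce) T \<in> D"
    "\<forall>x. p x = (\<Sum>ce\<leftarrow>L. fst ce * (\<Prod>i\<in>T. x i ^ snd ce i))"
    using assms unfolding poly_degs_in_def by blast
  define A where "A = snd ` set L"
  define c where "c \<alpha> = (\<Sum>ce\<leftarrow>L. if snd ce = \<alpha> then fst ce else 0)" for \<alpha>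
  show ?thesis
  proof (intro exI conjI allI ballI)
    show "finite A" unfolding A_def by simp
    fix x
    have "(\<Sum>\<alpha>\<in>A. c \<alpha> * (\<Prod>i\<in>T. x i ^ \<alpha> i)) =
        (\<Sum>\<alpha>\<in>A. \<Sum>ce\<leftarrow>L. if snd ce = \<alpha> then fst ce * (\<Prod>i\<in>T. x i ^ snd ce i) else 0)"
      unfolding c_def sum_list_mult_const[symmetric]
      by (intro sum.cong refl arg_cong[where f=sum_list] map_cong) auto
    also have "\<dots> = (\<Sum>ce\<leftarrow>L. \<Sum>\<alpha>\<in>A. if snd ce = \<alpha> then fst ce * (\<Prod>i\<in>T. x i ^ snd ce i) else 0)"
      by (rule sum_sum_list_swap)
    also have "\<dots> = (\<Sum>ce\<leftarrow>L. fst ce * (\<Prod>i\<in>T. x i ^ snd ce i))"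
      by (rule arg_cong[where f=sum_list], rule map_cong) (auto simp: A_def sum.delta)
    finally show "p x = (\<Sum>\<alpha>\<in>A. c \<alpha> * (\<Prod>i\<in>T. x i ^ \<alpha> i))" using L by simp
  qed (use L in \<open>auto simp: A_def\<close>)
qed

lemma poly_degs_in_imp_poly_deg_in: "poly_degs_in T D p \<Longrightarrow> D \<subseteq> {..t} \<Longrightarrow> poly_deg_in T t p"
  unfolding poly_deg_in_def by (drule poly_degs_in_imp_finite_expansion) blast

lemma poly_degs_in_imp_form_of_degree:
  "poly_degs_in V {d} p \<Longrightarrow> (\<exists>x. p x \<noteq> 0) \<Longrightarrow> form_of_degree V d p"
  unfolding form_of_degree_def by (drule poly_degs_in_imp_finite_expansion) blast

lemma poly_in_imp_poly_degs_in:
  assumes "poly_in T p"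
  shows "poly_degs_in T UNIV p"
proof -
  obtain t A c where A: "finite A" "\<forall>\<alpha>\<in>A. (\<forall>i. i \<notin> T \<longrightarrow> \<alpha> i = 0) \<and> (\<Sum>i\<in>T. \<alpha> i) \<le> t"
     "\<forall>x. p x = (\<Sum>\<alpha>\<in>A. c \<alpha> * (\<Prod>i\<in>T. x i ^ \<alpha> i))"
    using assms unfolding poly_in_def poly_deg_in_def by blast
  obtain xs where xs: "set xs = A" "distinct xs" using finite_distinct_list[OF A(1)] by blast
  show ?thesis unfolding poly_degs_in_def
  proof (rule exI[of _ "map (\<lambda>\<alpha>. (c \<alpha>, \<alpha>)) xs"], intro conjI allI ballI)
    fix x show "p x = (\<Sum>ce\<leftarrow>map (\<lambda>\<alpha>. (c \<alpha>, \<alpha>)) xs. fst ce * (\<Prod>i\<in>T. x i ^ snd ce i))"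
      using A(3) xs by (simp add: o_def sum_list_distinct_conv_sum_set)
  qed (use A xs in auto)
qed

lemma poly_degs_in_cong:
  assumes "poly_degs_in T D p" "\<forall>i\<in>T. x i = y i"
  shows "p x = p y"
proof -
  obtain L where L: "\<forall>x. p x = (\<Sum>ce\<leftarrow>L. fst ce * (\<Prod>i\<in>T. x i ^ snd ce i))"
    using assms unfolding poly_degs_in_def by blast
  have "(\<Sum>ce\<leftarrow>L. fst ce * (\<Prod>i\<in>T. x i ^ snd ce i)) = (\<Sum>ce\<leftarrow>L. fst ce * (\<Prod>i\<in>T. y i ^ snd ce i))"
    using assms(2) by (intro arg_cong[where f=sum_list] map_cong refl arg_cong[where f="\<lambda>z. _ * z"] prod.cong) auto
  then show ?thesis using L by simp
qed

section \<open>Univariate polynomials with bounded squares\<close>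

lemma degree_le_of_square_bound:
  fixes P :: "real poly"
  assumes "\<forall>t. t \<ge> 1 \<longrightarrow> (poly P t)^2 \<le> A * t^(2*m)"
  shows "degree P \<le> m"
proof (rule ccontr)
  assume "\<not> degree P \<le> m"
  hence dm: "m < degree P" by simp
  define Q where "Q = P * P - monom A (2*m)"
  have P0: "P \<noteq> 0" using dm by auto
  have cQ: "coeff Q (2 * degree P) = (lead_coeff P)^2"
    unfolding Q_def using dm coeff_mult_degree_sum[of P P] by (simp add: coeff_monom power2_eq_square mult_2)
  have "degree (monom A (2*m)) \<le> 2 * degree P" using degree_monom_le[of A "2*m"] dm by linarith
  then have dQ: "degree Q \<le> 2 * degree P"
    unfolding Q_def using P0 by (simp add: degree_diff_le degree_mult_eq)
  have "coeff Q (2 * degree P) \<noteq> 0" using cQ P0 by simp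
  hence "degree Q = 2 * degree P" using dQ le_degree antisym by blast
  hence lQ: "lead_coeff Q > 0" using cQ P0 by simp
  obtain n where n: "\<forall>x\<ge>n. poly Q x \<ge> lead_coeff Q" using poly_pinfty_gt_lc[OF lQ] by blast
  define x where "x = max n 1"
  have x: "x \<ge> n" "x \<ge> 1" by (auto simp: x_def)
  have "poly Q x > 0" using n x lQ by force
  moreover have "poly Q x \<le> 0" using assms[rule_format, OF x(2)]
    by (simp add: Q_def poly_monom power2_eq_square)
  ultimately show False by simp
qed

lemma coeff_eq_0_of_square_bound:
  fixes P :: "real poly"
  assumes "\<forall>t. t \<noteq> 0 \<longrightarrow> (poly P t)^2 \<le> A * t^(2*m)"
  shows "\<forall>i<m. coeff P i = 0"
  using assms
proof (induction m arbitrary: P)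
  case 0
  then show ?case by simp
next
  case (Suc m)
  have bound: "eventually (\<lambda>t. (poly P t)^2 \<le> A * t^(2*Suc m)) (at (0::real))"
    unfolding eventually_at_filter by (rule always_eventually) (use Suc.prems in auto)
  have lhs: "((\<lambda>t. (poly P t)^2) \<longlongrightarrow> (poly P 0)^2) (at 0)"
    and rhs: "((\<lambda>t. A * t^(2*Suc m)) \<longlongrightarrow> A * 0^(2*Suc m)) (at (0::real))"
    by (intro tendsto_intros)+
  have "(poly P 0)^2 \<le> A * 0^(2*Suc m)"
    using tendsto_le[OF _ rhs lhs bound] by simp
  hence p0: "poly P 0 = 0" by simp
  obtain a Q where PQ: "P = pCons a Q" by (cases P)
  have a0: "a = 0" using p0 PQ by simp
  have "\<forall>t. t \<noteq> 0 \<longrightarrow> (poly Q t)^2 \<le> A * t^(2*m)"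
  proof (intro allI impI)
    fix t :: real assume t: "t \<noteq> 0"
    have "t^2 * (poly Q t)^2 \<le> t^2 * (A * t^(2*m))"
      using Suc.prems[rule_format, OF t] PQ a0
      by (simp add: power_mult_distrib power2_eq_square mult_ac)
    then show "(poly Q t)^2 \<le> A * t^(2*m)" using t by simp
  qed
  from Suc.IH[OF this] show ?case using PQ a0 by (auto simp: less_Suc_eq_0_disj)
qed

lemma poly_eq_sum_coeffs_atMost:
  fixes P :: "real poly"
  assumes "degree P \<le> n"
  shows "poly P t = (\<Sum>i\<le>n. coeff P i * t^i)"
proof -
  have "poly P t = poly (\<Sum>i\<le>n. monom (coeff P i) i) t" using poly_as_sum_of_monoms'[OF assms] by simp
  also have "\<dots> = (\<Sum>i\<le>n. coeff P i * t^i)" by (simp add: poly_sum poly_monom)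
  finally show ?thesis .
qed

lemma trivariate_polyfun_eq_0:
  fixes D :: "nat \<Rightarrow> nat \<Rightarrow> nat \<Rightarrow> real"
  assumes "\<forall>u v w. (\<Sum>i\<le>N. \<Sum>j\<le>N. \<Sum>k\<le>N. D i j k * u^i * v^j * w^k) = 0"
  shows "\<forall>i\<le>N. \<forall>j\<le>N. \<forall>k\<le>N. D i j k = 0"
proof (intro allI impI)
  fix i j k assume ijk: "i \<le> N" "j \<le> N" "k \<le> N"
  have outer: "\<forall>i\<le>N. (\<Sum>j\<le>N. \<Sum>k\<le>N. D i j k * v^j * w^k) = 0" for v w :: real
  proof (rule polyfun_eq_0[THEN iffD1], rule allI)
    fix u :: real
    have "(\<Sum>i\<le>N. (\<Sum>j\<le>N. \<Sum>k\<le>N. D i j k * v^j * w^k) * u^i)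
        = (\<Sum>i\<le>N. \<Sum>j\<le>N. \<Sum>k\<le>N. D i j k * u^i * v^j * w^k)"
      by (simp add: sum_distrib_left sum_distrib_right mult_ac)
    then show "(\<Sum>i\<le>N. (\<Sum>j\<le>N. \<Sum>k\<le>N. D i j k * v^j * w^k) * u^i) = 0"
      using assms by simp
  qed
  have middle: "\<forall>j\<le>N. (\<Sum>k\<le>N. D i j k * w^k) = 0" for w :: real
  proof (rule polyfun_eq_0[THEN iffD1], rule allI)
    fix v :: real
    have "(\<Sum>j\<le>N. (\<Sum>k\<le>N. D i j k * w^k) * v^j) = (\<Sum>j\<le>N. \<Sum>k\<le>N. D i j k * v^j * w^k)"
      by (simp add: sum_distrib_left sum_distrib_right mult_ac)
    then show "(\<Sum>j\<le>N. (\<Sum>k\<le>N. D i j k * w^k) * v^j) = 0"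
      using outer ijk(1) by simp
  qed
  have "\<forall>k\<le>N. D i j k = 0"
    using middle ijk(2) by (intro polyfun_eq_0[THEN iffD1] allI) blast
  then show "D i j k = 0" using ijk(3) by blast
qed

lemma triple_sum_delta:
  fixes c u v w :: real
  assumes "a1 \<le> N" "a2 \<le> N" "a3 \<le> N"
  shows "(\<Sum>i\<le>N. \<Sum>j\<le>N. \<Sum>k\<le>N. (if a1 = i \<and> a2 = j \<and> a3 = k then c else 0) * u^i * v^j * w^k)
      = c * u^a1 * v^a2 * w^a3"
proof -
  define X where "X = c * u^a1 * v^a2 * w^a3"
  have e: "(if a1 = i \<and> a2 = j \<and> a3 = k then c else 0) * u^i * v^j * w^k =
     (if i = a1 then (if j = a2 then (if k = a3 then X else 0) else 0) else 0)" for i j k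
    by (auto simp: X_def)
  have k: "(\<Sum>k\<le>N. if i = a1 then (if j = a2 then (if k = a3 then X else 0) else 0) else 0)
      = (if i = a1 then (if j = a2 then X else 0) else 0)" for i j
    using assms by (cases "i = a1"; cases "j = a2") simp_all
  have j: "(\<Sum>j\<le>N. if i = a1 then (if j = a2 then X else 0) else 0) = (if i = a1 then X else 0)" for i
    using assms by (cases "i = a1") simp_all
  show ?thesis unfolding e k j X_def[symmetric] using assms by simp
qed

definition trivariate_coeff :: "(real \<times> (nat \<Rightarrow> nat)) list \<Rightarrow> nat \<Rightarrow> nat \<Rightarrow> nat \<Rightarrow> real" where
  "trivariate_coeff M i j k =
     (\<Sum>ce\<leftarrow>M. if snd ce 1 = i \<and> snd ce 2 = j \<and> snd ce 3 = k then fst ce else 0)"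

lemma sum_list_monomials_eq_triple_sum:
  assumes "\<forall>ce\<in>set M. snd ce 1 \<le> N \<and> snd ce 2 \<le> N \<and> snd ce 3 \<le> N"
  shows "(\<Sum>ce\<leftarrow>M. fst ce * u^(snd ce 1) * v^(snd ce 2) * w^(snd ce 3))
     = (\<Sum>i\<le>N. \<Sum>j\<le>N. \<Sum>k\<le>N. trivariate_coeff M i j k * u^i * v^j * w^k)"
  using assms
proof (induction M)
  case Nil
  then show ?case by (simp add: trivariate_coeff_def)
next
  case (Cons a M)
  have "(\<Sum>i\<le>N. \<Sum>j\<le>N. \<Sum>k\<le>N. trivariate_coeff (a # M) i j k * u^i * v^j * w^k)
     = (\<Sum>i\<le>N. \<Sum>j\<le>N. \<Sum>k\<le>N. (if snd a 1 = i \<and> snd a 2 = j \<and> snd a 3 = k then fst a else 0)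
            * u^i * v^j * w^k)
       + (\<Sum>i\<le>N. \<Sum>j\<le>N. \<Sum>k\<le>N. trivariate_coeff M i j k * u^i * v^j * w^k)"
    by (simp add: trivariate_coeff_def sum.distrib algebra_simps)
  also have "\<dots> = fst a * u^(snd a 1) * v^(snd a 2) * w^(snd a 3)
       + (\<Sum>i\<le>N. \<Sum>j\<le>N. \<Sum>k\<le>N. trivariate_coeff M i j k * u^i * v^j * w^k)"
    using Cons.prems by (subst triple_sum_delta) auto
  finally show ?case using Cons by simp
qed

lemma sum_list_monomials_triple_sum_form:
  fixes M :: "(real \<times> (nat \<Rightarrow> nat)) list"
  shows "\<exists>C N. 3 \<le> N \<and> (\<forall>u v w. (\<Sum>ce\<leftarrow>M. fst ce * u^(snd ce 1) * v^(snd ce 2) * w^(snd ce 3))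
        = (\<Sum>i\<le>N. \<Sum>j\<le>N. \<Sum>k\<le>N. C i j k * u^i * v^j * w^k))"
proof -
  define N where "N = 3 + (\<Sum>ce\<leftarrow>M. snd ce 1 + snd ce 2 + snd ce 3)"
  have "\<forall>ce\<in>set M. snd ce 1 \<le> N \<and> snd ce 2 \<le> N \<and> snd ce 3 \<le> N"
  proof
    fix ce assume "ce \<in> set M"
    then have "snd ce 1 + snd ce 2 + snd ce 3 \<le> (\<Sum>ce\<leftarrow>M. snd ce 1 + snd ce 2 + snd ce 3)"
      by (intro member_le_sum_list) auto
    then show "snd ce 1 \<le> N \<and> snd ce 2 \<le> N \<and> snd ce 3 \<le> N" unfolding N_def by linarith
  qed
  moreover have "3 \<le> N" unfolding N_def by simp
  ultimately show ?thesis using sum_list_monomials_eq_triple_sum[of M N] by blast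
qed

lemma triple_sum_atMost_3:
  fixes G :: "nat \<Rightarrow> nat \<Rightarrow> nat \<Rightarrow> real"
  assumes N: "3 \<le> N"
    and z: "\<And>i j k. i \<le> N \<Longrightarrow> j \<le> N \<Longrightarrow> k \<le> N \<Longrightarrow> i + j + k \<noteq> 3 \<Longrightarrow> G i j k = 0"
  shows "(\<Sum>i\<le>N. \<Sum>j\<le>N. \<Sum>k\<le>N. G i j k) = (\<Sum>i\<le>3. \<Sum>j\<le>3. \<Sum>k\<le>3. G i j k)"
proof -
  have sub: "{..3} \<subseteq> {..N}" using N by auto
  have k: "(\<Sum>k\<le>N. G i j k) = (\<Sum>k\<le>3. G i j k)" if "i \<le> N" "j \<le> N" for i j
    by (rule sum.mono_neutral_right[OF _ sub]) (use that in \<open>auto intro!: z\<close>)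
  have j: "(\<Sum>j\<le>N. \<Sum>k\<le>3. G i j k) = (\<Sum>j\<le>3. \<Sum>k\<le>3. G i j k)" if "i \<le> N" for i
    by (rule sum.mono_neutral_right[OF _ sub]) (use that N in \<open>auto intro!: sum.neutral z\<close>)
  have "(\<Sum>i\<le>N. \<Sum>j\<le>N. \<Sum>k\<le>N. G i j k) = (\<Sum>i\<le>N. \<Sum>j\<le>N. \<Sum>k\<le>3. G i j k)"
    by (intro sum.cong refl k) auto
  also have "\<dots> = (\<Sum>i\<le>N. \<Sum>j\<le>3. \<Sum>k\<le>3. G i j k)"
    by (intro sum.cong refl j) auto
  also have "\<dots> = (\<Sum>i\<le>3. \<Sum>j\<le>3. \<Sum>k\<le>3. G i j k)"
    by (rule sum.mono_neutral_right[OF _ sub]) (use N in \<open>auto intro!: sum.neutral z\<close>)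
  finally show ?thesis .
qed

section \<open>The Choi--Lam form\<close>

definition choi_lam :: "real \<Rightarrow> real \<Rightarrow> real \<Rightarrow> real" where
  "choi_lam u v w = u^4*v^2 + v^4*w^2 + u^2*w^4 - 3*u^2*v^2*w^2"

lemma choi_lam_scale: "choi_lam (s*u) (s*v) (s*w) = choi_lam u v w * s^(2*3)"
  unfolding choi_lam_def by (simp add: power_mult_distrib algebra_simps eval_nat_numeral)

text \<open>Each square \<open>(a/2)\<^sup>2\<close> appears twice so that the nine terms form a list of squares.\<close>
lemma sum_squares_times_choi_lam:
  "(u^2+v^2+w^2) * choi_lam u v w =
       (u^3*v - u*v*w^2)^2 + (v^3*w - u^2*v*w)^2 + (w^3*u - u*v^2*w)^2
     + ((u^2*v^2 - v^2*w^2)/2)^2 + ((u^2*v^2 - v^2*w^2)/2)^2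
     + ((v^2*w^2 - w^2*u^2)/2)^2 + ((v^2*w^2 - w^2*u^2)/2)^2
     + ((w^2*u^2 - u^2*v^2)/2)^2 + ((w^2*u^2 - u^2*v^2)/2)^2"
proof -
  have "2*((u^2+v^2+w^2) * (u^4*v^2 + v^4*w^2 + u^2*w^4 - 3*u^2*v^2*w^2))
      = 2*((u^3*v - u*v*w^2)^2 + (v^3*w - u^2*v*w)^2 + (w^3*u - u*v^2*w)^2)
        + (u^2*v^2 - v^2*w^2)^2 + (v^2*w^2 - w^2*u^2)^2 + (w^2*u^2 - u^2*v^2)^2"
    by algebra
  then show ?thesis unfolding choi_lam_def by (simp add: power_divide)
qed

lemma choi_lam_nonneg: "choi_lam u v w \<ge> 0"
proof (cases "u^2+v^2+w^2 > 0")
  case True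
  have "0 \<le> (u^2+v^2+w^2) * choi_lam u v w" unfolding sum_squares_times_choi_lam by simp
  then show ?thesis using True by (simp add: zero_le_mult_iff)
next
  case False
  then have "u = 0" "v = 0" "w = 0"
    by (smt (verit) power2_less_eq_zero_iff zero_le_power2)+
  then show ?thesis by (simp add: choi_lam_def)
qed

lemma quadratic_square_le_square_imp_leading_0:
  fixes a b :: real
  assumes "\<forall>u. (a*u^2 + b*u)^2 \<le> u^2"
  shows "a = 0"
proof (rule ccontr)
  assume a: "a \<noteq> 0"
  define u where "u = (\<bar>b\<bar>+2)/a"
  have au: "a*u = \<bar>b\<bar>+2" using a by (simp add: u_def)
  have "u \<noteq> 0" using a by (simp add: u_def)
  have "a*u^2 + b*u = u*(a*u) + b*u" by (simp add: power2_eq_square)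
  then have "a*u^2 + b*u = u*(\<bar>b\<bar>+2+b)" by (simp add: au algebra_simps)
  then have "(a*u^2 + b*u)^2 = u^2 * (\<bar>b\<bar>+2+b)^2" by (simp add: power_mult_distrib)
  moreover have "(\<bar>b\<bar>+2+b)^2 \<ge> 2^2" by (intro power_mono) auto
  then have "u^2 * (\<bar>b\<bar>+2+b)^2 \<ge> u^2 * 4" by (intro mult_left_mono) auto
  moreover have "u^2 > 0" using \<open>u \<noteq> 0\<close> by simp
  ultimately show False using assms[rule_format, of u] by linarith
qed

lemma atMost_3: "{..3::nat} = {0,1,2,3}"
  by auto

text \<open>Restricted to a line through the origin, \<open>F\<close> becomes a univariate polynomial whose square is
  bounded by a multiple of \<open>t\<^sup>6\<close> both near \<open>0\<close> and near \<open>\<infinity>\<close>, hence a multiple of \<open>t\<^sup>3\<close>.\<close>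
lemma square_le_choi_lam_imp_homogeneous:
  fixes C :: "nat \<Rightarrow> nat \<Rightarrow> nat \<Rightarrow> real" and F :: "real \<Rightarrow> real \<Rightarrow> real \<Rightarrow> real"
  assumes F: "\<And>u v w. F u v w = (\<Sum>i\<le>N. \<Sum>j\<le>N. \<Sum>k\<le>N. C i j k * u^i * v^j * w^k)"
    and bound: "\<And>u v w. (F u v w)^2 \<le> choi_lam u v w"
  shows "F (t*u) (t*v) (t*w) = t^3 * F u v w"
proof -
  define P where "P = (\<Sum>i\<le>N. \<Sum>j\<le>N. \<Sum>k\<le>N. monom (C i j k * u^i*v^j*w^k) (i+j+k))"
  have P_eval: "poly P s = F (s*u) (s*v) (s*w)" for s
    by (simp add: P_def F poly_sum poly_monom power_mult_distrib power_add mult_ac)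
  have P_bound: "(poly P s)^2 \<le> choi_lam u v w * s^(2*3)" for s
    using bound[of "s*u" "s*v" "s*w"] by (simp add: P_eval choi_lam_scale)
  have "degree P \<le> 3" by (rule degree_le_of_square_bound) (use P_bound in auto)
  moreover have "\<forall>i<3. coeff P i = 0" by (rule coeff_eq_0_of_square_bound) (use P_bound in auto)
  ultimately have "poly P s = coeff P 3 * s^3" for s
    using poly_eq_sum_coeffs_atMost[of P 3 s] by (simp add: atMost_3)
  from this[of t] this[of 1] show ?thesis by (simp add: P_eval)
qed

lemma square_le_choi_lam_imp_cubic:
  fixes C :: "nat \<Rightarrow> nat \<Rightarrow> nat \<Rightarrow> real" and F :: "real \<Rightarrow> real \<Rightarrow> real \<Rightarrow> real"
  assumes F: "\<And>u v w. F u v w = (\<Sum>i\<le>N. \<Sum>j\<le>N. \<Sum>k\<le>N. C i j k * u^i * v^j * w^k)"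
    and bound: "\<And>u v w. (F u v w)^2 \<le> choi_lam u v w"
    and "i + j + k \<noteq> 3" "i \<le> N" "j \<le> N" "k \<le> N"
  shows "C i j k = 0"
proof -
  have "\<forall>u v w. (\<Sum>i\<le>N. \<Sum>j\<le>N. \<Sum>k\<le>N. (C i j k * (2^(i+j+k) - 8)) * u^i * v^j * w^k) = 0"
  proof (intro allI)
    fix u v w :: real
    have "(\<Sum>i\<le>N. \<Sum>j\<le>N. \<Sum>k\<le>N. (C i j k * (2^(i+j+k) - 8)) * u^i * v^j * w^k)
        = F (2*u) (2*v) (2*w) - 8 * F u v w"
      by (simp add: F sum_distrib_left sum_subtractf[symmetric] power_mult_distrib power_add algebra_simps)
    then show "(\<Sum>i\<le>N. \<Sum>j\<le>N. \<Sum>k\<le>N. (C i j k * (2^(i+j+k) - 8)) * u^i * v^j * w^k) = 0"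
      using square_le_choi_lam_imp_homogeneous[OF F bound, of 2 u v w] by simp
  qed
  from trivariate_polyfun_eq_0[OF this] have "C i j k * (2^(i+j+k) - 8) = 0"
    using assms(4-6) by blast
  moreover have "(2::real)^(i+j+k) \<noteq> 2^3"
    using assms(3) by (subst power_inject_exp) auto
  ultimately show ?thesis by simp
qed

definition ternary_cubic :: "(nat \<Rightarrow> nat \<Rightarrow> nat \<Rightarrow> real) \<Rightarrow> real \<Rightarrow> real \<Rightarrow> real \<Rightarrow> real" where
  "ternary_cubic C u v w = C 3 0 0 * u^3 + C 0 3 0 * v^3 + C 0 0 3 * w^3
     + C 2 1 0*u^2*v + C 2 0 1 * u^2*w + C 1 2 0*u*v^2 + C 0 2 1*v^2*w + C 1 0 2*u*w^2
     + C 0 1 2 * v*w^2 + C 1 1 1*u*v*w"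

text \<open>Evaluating the bound on the coordinate axes and on the lines \<open>(u,0,1)\<close>, \<open>(1,u,0)\<close>,
  \<open>(0,1,u)\<close> removes six coefficients, and the zeros \<open>(\<plusminus>1,\<plusminus>1,\<plusminus>1)\<close> of the Choi--Lam form give a
  nonsingular linear system for the remaining four.\<close>
lemma ternary_cubic_square_le_choi_lam_imp_zero:
  assumes bound: "\<And>u v w. (ternary_cubic C u v w)^2 \<le> choi_lam u v w"
  shows "ternary_cubic C u v w = 0"
proof -
  note E_def = ternary_cubic_def
  have c300: "C 3 0 0 = 0" using bound[of 1 0 0] by (simp add: E_def choi_lam_def)
  have c030: "C 0 3 0 = 0" using bound[of 0 1 0] by (simp add: E_def choi_lam_def)
  have c003: "C 0 0 3 = 0" using bound[of 0 0 1] by (simp add: E_def choi_lam_def)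
  have c201: "C 2 0 1 = 0"
  proof (rule quadratic_square_le_square_imp_leading_0[where b="C 1 0 2"], rule allI)
    fix u show "(C 2 0 1 * u\<^sup>2 + C 1 0 2 * u)\<^sup>2 \<le> u\<^sup>2"
      using bound[of u 0 1] by (simp add: E_def choi_lam_def c300 c003 mult_ac)
  qed
  have c120: "C 1 2 0 = 0"
  proof (rule quadratic_square_le_square_imp_leading_0[where b="C 2 1 0"], rule allI)
    fix u show "(C 1 2 0 * u\<^sup>2 + C 2 1 0 * u)\<^sup>2 \<le> u\<^sup>2"
      using bound[of 1 u 0] by (simp add: E_def choi_lam_def c300 c030 mult_ac add.commute)
  qed
  have c012: "C 0 1 2 = 0"
  proof (rule quadratic_square_le_square_imp_leading_0[where b="C 0 2 1"], rule allI)
    fix u show "(C 0 1 2 * u\<^sup>2 + C 0 2 1 * u)\<^sup>2 \<le> u\<^sup>2"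
      using bound[of 0 1 u] by (simp add: E_def choi_lam_def c030 c003 mult_ac add.commute)
  qed
  note known = c300 c030 c003 c201 c120 c012
  have zero: "ternary_cubic C a b c = 0" if "choi_lam a b c = 0" for a b c
    using bound[of a b c] that by simp
  have "C 2 1 0 + C 0 2 1 + C 1 0 2 + C 1 1 1 = 0"
    using zero[of 1 1 1] known by (simp add: choi_lam_def E_def)
  moreover have "C 2 1 0 + C 0 2 1 - C 1 0 2 - C 1 1 1 = 0"
    using zero[of "-1" 1 1] known by (simp add: choi_lam_def E_def)
  moreover have "- C 2 1 0 + C 0 2 1 + C 1 0 2 - C 1 1 1 = 0"
    using zero[of 1 "-1" 1] known by (simp add: choi_lam_def E_def)
  moreover have "C 2 1 0 - C 0 2 1 + C 1 0 2 - C 1 1 1 = 0"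
    using zero[of 1 1 "-1"] known by (simp add: choi_lam_def E_def)
  ultimately have "C 2 1 0 = 0" "C 0 2 1 = 0" "C 1 0 2 = 0" "C 1 1 1 = 0" by linarith+
  then show ?thesis using known by (simp add: E_def)
qed

lemma square_le_choi_lam_imp_zero:
  fixes C :: "nat \<Rightarrow> nat \<Rightarrow> nat \<Rightarrow> real" and F :: "real \<Rightarrow> real \<Rightarrow> real \<Rightarrow> real"
  assumes F: "\<And>u v w. F u v w = (\<Sum>i\<le>N. \<Sum>j\<le>N. \<Sum>k\<le>N. C i j k * u^i * v^j * w^k)"
    and N: "3 \<le> N" and bound: "\<And>u v w. (F u v w)^2 \<le> choi_lam u v w"
  shows "F u v w = 0"
proof -
  note cubic = square_le_choi_lam_imp_cubic[OF F bound]
  have F_cubic: "F u v w = ternary_cubic C u v w" for u v w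
  proof -
    have "F u v w = (\<Sum>i\<le>3. \<Sum>j\<le>3. \<Sum>k\<le>3. C i j k * u^i * v^j * w^k)"
      unfolding F by (rule triple_sum_atMost_3[OF N]) (use cubic in auto)
    also have "\<dots> = ternary_cubic C u v w"
      using N by (simp add: atMost_3 ternary_cubic_def cubic algebra_simps)
    finally show ?thesis .
  qed
  show ?thesis
    unfolding F_cubic by (rule ternary_cubic_square_le_choi_lam_imp_zero) (use bound F_cubic in auto)
qed

section \<open>No decomposition into sums of squares on the two cliques\<close>

lemma poly_degs_in_1234_expansion:
  assumes "poly_degs_in {1,2,3,4} D p"
  shows "\<exists>M::(real \<times> (nat \<Rightarrow> nat)) list. \<forall>x t. p (x(4:=t)) =
     (\<Sum>ce\<leftarrow>M. fst ce * x 1^snd ce 1 * x 2^snd ce 2 * x 3^snd ce 3 * t^snd ce 4)"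
proof -
  obtain L where L: "\<forall>x. p x = (\<Sum>ce\<leftarrow>L. fst ce * (\<Prod>i\<in>{1,2,3,4}. x i ^ snd ce i))"
    using assms unfolding poly_degs_in_def by blast
  show ?thesis by (rule exI[of _ L]) (simp add: L mult_ac)
qed

lemma poly_sum_list_map: "poly (\<Sum>a\<leftarrow>M. g a) t = (\<Sum>a\<leftarrow>M. poly (g a) t)"
  by (induction M) auto

lemma f1_eq: "f1 x = (x 4)^2 * choi_lam (x 1) (x 2) (x 3) + (x 3)^8"
  by (simp add: f1_def choi_lam_def)

lemma affine_in_x4_if_square_le_f1:
  assumes "poly_degs_in {1,2,3,4} D p" and bound: "\<forall>x. (p x)^2 \<le> f1 x"
  shows "p (x(4:=t)) = p (x(4:=0)) + t * (p (x(4:=1)) - p (x(4:=0)))"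
proof -
  obtain M :: "(real \<times> (nat \<Rightarrow> nat)) list" where M: "\<forall>x t. p (x(4:=t)) =
     (\<Sum>ce\<leftarrow>M. fst ce * x 1^snd ce 1 * x 2^snd ce 2 * x 3^snd ce 3 * t^snd ce 4)"
    using poly_degs_in_1234_expansion[OF assms(1)] by blast
  define P where
    "P = (\<Sum>ce\<leftarrow>M. monom (fst ce * x 1^snd ce 1 * x 2^snd ce 2 * x 3^snd ce 3) (snd ce 4))"
  have P_eval: "poly P s = p (x(4:=s))" for s
    by (simp add: P_def poly_sum_list_map poly_monom M o_def)
  define S where "S = choi_lam (x 1) (x 2) (x 3)"
  have "(poly P s)^2 \<le> (\<bar>S\<bar> + x 3^8) * s^(2*1)" if "s \<ge> 1" for s
  proof -
    have "(poly P s)^2 \<le> s^2 * S + x 3^8"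
      using bound[rule_format, of "x(4:=s)"] by (simp add: P_eval f1_eq S_def)
    moreover have "s^2 * S \<le> s^2 * \<bar>S\<bar>"
      by (intro mult_left_mono) auto
    moreover have "x 3^8 * 1 \<le> x 3^8 * s^2"
      using that by (intro mult_left_mono) (simp_all add: one_le_power zero_le_even_power)
    ultimately have "(poly P s)^2 \<le> s^2 * \<bar>S\<bar> + x 3^8 * s^2" by linarith
    then show ?thesis by (simp add: power2_eq_square algebra_simps)
  qed
  then have "degree P \<le> 1" by (intro degree_le_of_square_bound) auto
  then have "poly P s = coeff P 0 + coeff P 1 * s" for s
    using poly_eq_sum_coeffs_atMost[of P 1 s] by simp
  from this[of t] this[of 0] this[of 1] show ?thesis by (simp add: P_eval)
qed

lemma x4_increment_eq_0_if_square_le_choi_lam: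
  assumes "poly_degs_in {1,2,3,4} D p"
    and bound: "\<forall>x. (p (x(4:=1)) - p (x(4:=0)))^2 \<le> choi_lam (x 1) (x 2) (x 3)"
  shows "p (x(4:=1)) - p (x(4:=0)) = 0"
proof -
  obtain M :: "(real \<times> (nat \<Rightarrow> nat)) list" where M: "\<forall>x t. p (x(4:=t)) =
     (\<Sum>ce\<leftarrow>M. fst ce * x 1^snd ce 1 * x 2^snd ce 2 * x 3^snd ce 3 * t^snd ce 4)"
    using poly_degs_in_1234_expansion[OF assms(1)] by blast
  define M' where "M' = map (\<lambda>ce. (fst ce * (1 - 0^snd ce 4), snd ce)) M"
  have increment: "p (y(4:=1)) - p (y(4:=0)) =
      (\<Sum>ce\<leftarrow>M'. fst ce * y 1^snd ce 1 * y 2^snd ce 2 * y 3^snd ce 3)" for y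
    unfolding M[rule_format] M'_def by (simp add: sum_list_subtractf[symmetric] o_def algebra_simps)
  obtain C N where CN: "3 \<le> N" "\<forall>u v w. (\<Sum>ce\<leftarrow>M'. fst ce * u^(snd ce 1) * v^(snd ce 2) * w^(snd ce 3))
        = (\<Sum>i\<le>N. \<Sum>j\<le>N. \<Sum>k\<le>N. C i j k * u^i * v^j * w^k)"
    using sum_list_monomials_triple_sum_form[of M'] by blast
  define F where "F u v w = (\<Sum>i\<le>N. \<Sum>j\<le>N. \<Sum>k\<le>N. C i j k * u^i * v^j * w^k)" for u v w
  have F_increment: "p (y(4:=1)) - p (y(4:=0)) = F (y 1) (y 2) (y 3)" for y
    unfolding increment F_def using CN(2) by simp
  have "(F u v w)^2 \<le> choi_lam u v w" for u v w
  proof -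
    define y :: "nat \<Rightarrow> real" where "y i = (if i = 1 then u else if i = 2 then v else w)" for i
    show ?thesis using bound[rule_format, of y] by (simp add: F_increment y_def)
  qed
  then have "F (x 1) (x 2) (x 3) = 0" by (rule square_le_choi_lam_imp_zero[OF F_def CN(1)])
  then show ?thesis by (simp add: F_increment)
qed

lemma sum_list_squares_second_difference:
  "(\<Sum>p\<leftarrow>ps. (a p + b p)^2) + (\<Sum>p\<leftarrow>ps. (a p - b p)^2) - 2 * (\<Sum>p\<leftarrow>ps. (a p)^2)
   = 2 * (\<Sum>p\<leftarrow>ps. (b p)^2 :: real)"
  by (induction ps) (auto simp: algebra_simps power2_eq_square)

lemma f1_minus_nonneg_x4_free_not_sos:
  assumes ps: "\<forall>p\<in>set ps. poly_degs_in {1,2,3,4} UNIV p"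
    and g_nonneg: "\<forall>x. g x \<ge> 0" and g_x4_free: "\<forall>x a. g (x(4:=a)) = g x"
    and sos: "\<forall>x. (\<Sum>p\<leftarrow>ps. (p x)^2) = f1 x - g x"
  shows False
proof -
  have bounded: "(p x)^2 \<le> f1 x" if "p \<in> set ps" for p x
  proof -
    have "(p x)^2 \<le> (\<Sum>p\<leftarrow>ps. (p x)^2)" using that by (intro member_le_sum_list) auto
    then show ?thesis using sos[rule_format, of x] g_nonneg[rule_format, of x] by linarith
  qed
  define b where "b p x = p (x(4:=1)) - p (x(4:=0))" for p :: "(nat \<Rightarrow> real) \<Rightarrow> real" and x
  have affine: "p (x(4:=t)) = p (x(4:=0)) + t * b p x" if "p \<in> set ps" for p x t
    unfolding b_def using ps bounded that by (intro affine_in_x4_if_square_le_f1) auto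
  have slopes: "(\<Sum>p\<leftarrow>ps. (b p x)^2) = choi_lam (x 1) (x 2) (x 3)" for x
  proof -
    define Q where "Q s = (\<Sum>p\<leftarrow>ps. (p (x(4:=s)))^2)" for s
    have Q_f1: "Q s = s^2 * choi_lam (x 1) (x 2) (x 3) + x 3^8 - g x" for s
      using sos[rule_format, of "x(4:=s)"] g_x4_free by (simp add: Q_def f1_eq)
    have Q_affine: "Q s = (\<Sum>p\<leftarrow>ps. (p (x(4:=0)) + s * b p x)^2)" for s
      unfolding Q_def using affine by (intro arg_cong[where f=sum_list] map_cong refl) metis
    have "2 * (\<Sum>p\<leftarrow>ps. (b p x)^2) = Q 1 + Q (-1) - 2 * Q 0"
      unfolding Q_affine using sum_list_squares_second_difference[of "\<lambda>p. p (x(4:=0))" "\<lambda>p. b p x" ps]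
      by simp
    also have "\<dots> = 2 * choi_lam (x 1) (x 2) (x 3)" unfolding Q_f1 by simp
    finally show ?thesis by simp
  qed
  have slopes_0: "b p x = 0" if "p \<in> set ps" for p x
    unfolding b_def
  proof (rule x4_increment_eq_0_if_square_le_choi_lam[where D=UNIV], use ps that in blast, rule allI)
    fix y
    have "(b p y)^2 \<le> (\<Sum>p\<leftarrow>ps. (b p y)^2)" using that by (intro member_le_sum_list) auto
    then show "(p (y(4:=1)) - p (y(4:=0)))^2 \<le> choi_lam (y 1) (y 2) (y 3)"
      using slopes[of y] by (simp add: b_def)
  qed
  have "(\<Sum>p\<leftarrow>ps. (b p (\<lambda>i. real i))^2) = (\<Sum>p\<leftarrow>ps. 0)"
    by (intro arg_cong[where f=sum_list] map_cong refl) (simp add: slopes_0)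
  then have "choi_lam 1 2 3 = 0"
    using slopes[of "\<lambda>i. real i"] by simp
  then show False by (simp add: choi_lam_def)
qed

lemma f_not_sum_of_clique_sos:
  "\<not> (\<exists>\<sigma>1 \<sigma>2. sos_in {1,2,3,4} \<sigma>1 \<and> sos_in {1,2,3,5} \<sigma>2 \<and> (\<forall>x. f x = \<sigma>1 x + \<sigma>2 x))"
proof
  assume "\<exists>\<sigma>1 \<sigma>2. sos_in {1,2,3,4} \<sigma>1 \<and> sos_in {1,2,3,5} \<sigma>2 \<and> (\<forall>x. f x = \<sigma>1 x + \<sigma>2 x)"
  then obtain \<sigma>1 \<sigma>2 ps rs where
    ps: "\<forall>p\<in>set ps. poly_in {1,2,3,4} p" "\<forall>x. \<sigma>1 x = (\<Sum>p\<leftarrow>ps. (p x)^2)" and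
    rs: "\<forall>p\<in>set rs. poly_in {1,2,3,5} p" "\<forall>x. \<sigma>2 x = (\<Sum>p\<leftarrow>rs. (p x)^2)" and
    f_eq: "\<forall>x. f x = \<sigma>1 x + \<sigma>2 x"
    unfolding sos_in_def by blast
  have free: "(\<Sum>p\<leftarrow>qs. (p (x(i:=a)))^2) = (\<Sum>p\<leftarrow>qs. (p x)^2)"
    if "\<forall>p\<in>set qs. poly_in T p" "i \<notin> T" for qs T i x a
    using that by (intro arg_cong[where f=sum_list] map_cong refl arg_cong[where f="\<lambda>y. y^2"]
        poly_degs_in_cong[OF poly_in_imp_poly_degs_in]) auto
  have \<sigma>1_x5_free: "\<sigma>1 (x(5:=a)) = \<sigma>1 x" for x a
    unfolding ps(2)[rule_format] using free[OF ps(1), of 5] by simp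
  have \<sigma>2_x4_free: "\<sigma>2 (x(4:=a)) = \<sigma>2 x" for x a
    unfolding rs(2)[rule_format] using free[OF rs(1), of 4] by simp
  show False
  proof (rule f1_minus_nonneg_x4_free_not_sos)
    show "\<forall>p\<in>set ps. poly_degs_in {1,2,3,4} UNIV p" using ps(1) poly_in_imp_poly_degs_in by blast
    show "\<forall>x. 0 \<le> \<sigma>2 (x(5:=0))" by (auto simp: rs(2) intro!: sum_list_nonneg)
    have "(x(4:=a))(5:=0) = (x(5:=0))(4:=a)" for x :: "nat \<Rightarrow> real" and a
      by (rule fun_upd_twist) simp
    then show "\<forall>x a. \<sigma>2 ((x(4:=a))(5:=0)) = \<sigma>2 (x(5:=0))"
      using \<sigma>2_x4_free by simp
    have "f (x(5:=0)) = f1 x" for x by (simp add: f_def f1_def f2_def)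
    then show "\<forall>x. (\<Sum>p\<leftarrow>ps. (p x)^2) = f1 x - \<sigma>2 (x(5:=0))"
      using f_eq \<sigma>1_x5_free ps(2) by (metis add_diff_cancel_right')
  qed
qed

section \<open>The form \<open>f\<close> and its rational certificate\<close>

lemma f_nonneg_form_not_pos_def:
  "form_of_degree {1..5} 8 f \<and> nonneg_form f \<and> \<not> pos_def_form {1..5} f"
proof (intro conjI)
  have f_expanded: "f = (\<lambda>x. (x 4)^2 * ((x 1)^4 * (x 2)^2 + (x 2)^4 * (x 3)^2
      + (x 1)^2 * (x 3)^4 - 3 * (x 1)^2 * (x 2)^2 * (x 3)^2) + (x 3)^8
      + (x 1)^2 * (x 2)^2 * (x 3)^2 * (x 5)^2)"
    by (simp add: fun_eq_iff f_def f1_def f2_def)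
  have "poly_degs_in {1..5} {8} f"
    unfolding f_expanded by (rule poly_degs_in_intros | simp)+
  moreover have "f (\<lambda>i. 1) \<noteq> 0" by (simp add: f_def f1_def f2_def)
  ultimately show "form_of_degree {1..5} 8 f" by (blast intro: poly_degs_in_imp_form_of_degree)
  show "nonneg_form f"
    unfolding nonneg_form_def f_def f1_eq f2_def
    by (intro allI add_nonneg_nonneg mult_nonneg_nonneg choi_lam_nonneg) (simp_all add: zero_le_even_power)
  show "\<not> pos_def_form {1..5} f"
  proof
    assume pos_def: "pos_def_form {1..5} f"
    have "\<exists>i\<in>{1..5::nat}. (\<lambda>i. if i = 4 then 1 else 0 :: real) i \<noteq> 0"
      by (rule bexI[of _ 4]) auto
    moreover have "(\<exists>i\<in>{1..5}. y i \<noteq> 0) \<longrightarrow> 0 < f y" for y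
      using pos_def unfolding pos_def_form_def by (rule spec)
    ultimately have "0 < f (\<lambda>i. if i = 4 then 1 else 0)" by (rule rev_mp)
    then show False by (simp add: f_def f1_def f2_def)
  qed
qed

definition pairwise_products ::
  "((nat \<Rightarrow> real) \<Rightarrow> real) list \<Rightarrow> ((nat \<Rightarrow> real) \<Rightarrow> real) list \<Rightarrow> ((nat \<Rightarrow> real) \<Rightarrow> real) list" where
  "pairwise_products ps qs = concat (map (\<lambda>p. map (\<lambda>q. (\<lambda>x. p x * q x)) qs) ps)"

lemma sum_squares_pairwise_products:
  "(\<Sum>r\<leftarrow>pairwise_products ps qs. (r x)^2) = (\<Sum>p\<leftarrow>ps. (p x)^2) * (\<Sum>q\<leftarrow>qs. (q x)^2)"
  by (induction ps) (simp_all add: pairwise_products_def o_def power_mult_distrib sum_list_const_mult distrib_right)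

lemma poly_degs_in_pairwise_products:
  assumes "\<forall>p\<in>set ps. poly_degs_in T {a} p" "\<forall>q\<in>set qs. poly_degs_in T {b} q" "c = a + b"
  shows "\<forall>r\<in>set (pairwise_products ps qs). poly_degs_in T {c} r"
proof
  fix r assume "r \<in> set (pairwise_products ps qs)"
  then obtain p q where "p \<in> set ps" "q \<in> set qs" "r = (\<lambda>x. p x * q x)"
    unfolding pairwise_products_def by auto
  then show "poly_degs_in T {c} r" using assms poly_degs_in_mult[of T a p b q c] by simp
qed

lemma sos_deg_in_of_list:
  assumes "\<forall>p\<in>set ps. poly_degs_in T {d} p" "\<forall>x. \<sigma> x = (\<Sum>p\<leftarrow>ps. (p x)^2)"
  shows "sos_deg_in T d \<sigma>"
  unfolding sos_deg_in_def using assms poly_degs_in_imp_poly_deg_in[of T "{d}" _ d] by blast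

definition vars :: "nat list \<Rightarrow> ((nat \<Rightarrow> real) \<Rightarrow> real) list" where
  "vars is = map (\<lambda>i x. x i) is"

lemma sum_squares_vars: "(\<Sum>p\<leftarrow>vars is. (p x)^2) = (\<Sum>i\<leftarrow>is. (x i)^2)"
  by (simp add: vars_def o_def)

lemma poly_degs_in_vars:
  assumes "set is \<subseteq> T" "finite T"
  shows "\<forall>p\<in>set (vars is). poly_degs_in T {1} p"
proof
  fix p assume "p \<in> set (vars is)"
  then obtain i where "i \<in> set is" "p = (\<lambda>x. x i)" by (auto simp: vars_def)
  then show "poly_degs_in T {1} p" using assms poly_degs_in_var[of i T] by blast
qed

definition choi_lam_sos :: "((nat \<Rightarrow> real) \<Rightarrow> real) list" where
  "choi_lam_sos = [\<lambda>x. x 1^3*x 2 - x 1*x 2*x 3^2, \<lambda>x. x 2^3*x 3 - x 1^2*x 2*x 3,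
     \<lambda>x. x 3^3*x 1 - x 1*x 2^2*x 3,
     \<lambda>x. (x 1^2*x 2^2 - x 2^2*x 3^2)/2, \<lambda>x. (x 1^2*x 2^2 - x 2^2*x 3^2)/2,
     \<lambda>x. (x 2^2*x 3^2 - x 3^2*x 1^2)/2, \<lambda>x. (x 2^2*x 3^2 - x 3^2*x 1^2)/2,
     \<lambda>x. (x 3^2*x 1^2 - x 1^2*x 2^2)/2, \<lambda>x. (x 3^2*x 1^2 - x 1^2*x 2^2)/2]"

lemma sum_squares_choi_lam_sos:
  "(\<Sum>q\<leftarrow>choi_lam_sos. (q x)^2) = (x 1^2 + x 2^2 + x 3^2) * choi_lam (x 1) (x 2) (x 3)"
  unfolding sum_squares_times_choi_lam by (simp add: choi_lam_sos_def add.assoc)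

lemma poly_degs_in_choi_lam_sos: "{1,2,3} \<subseteq> T \<Longrightarrow> finite T \<Longrightarrow> \<forall>q\<in>set choi_lam_sos. poly_degs_in T {4} q"
  unfolding choi_lam_sos_def by simp (intro conjI; (rule poly_degs_in_intros | simp)+)

lemma H1_f1_sos: "sos_deg_in {1,2,3,4} 6 (\<lambda>x. H1 x * f1 x)"
proof (rule sos_deg_in_of_list)
  define qs where "qs = pairwise_products (vars [4]) choi_lam_sos
    @ pairwise_products (vars [1,2,3]) [\<lambda>x. x 3^4]"
  have x3_4: "\<forall>p\<in>set [\<lambda>x. x 3^4]. poly_degs_in {1,2,3,4} {4} p"
    by simp (rule poly_degs_in_intros | simp)+
  have "\<forall>q\<in>set (pairwise_products (vars [4]) choi_lam_sos). poly_degs_in {1,2,3,4} {5} q"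
    by (rule poly_degs_in_pairwise_products[OF poly_degs_in_vars poly_degs_in_choi_lam_sos]) auto
  moreover have "\<forall>q\<in>set (pairwise_products (vars [1,2,3]) [\<lambda>x. x 3^4]). poly_degs_in {1,2,3,4} {5} q"
    by (rule poly_degs_in_pairwise_products[OF poly_degs_in_vars x3_4]) auto
  ultimately have qs: "\<forall>q\<in>set qs. poly_degs_in {1,2,3,4} {5} q"
    unfolding qs_def by auto
  show "\<forall>p\<in>set (pairwise_products (vars [1,2,3,4]) qs). poly_degs_in {1,2,3,4} {6} p"
    by (rule poly_degs_in_pairwise_products[OF poly_degs_in_vars qs]) auto
  show "\<forall>x. H1 x * f1 x = (\<Sum>p\<leftarrow>pairwise_products (vars [1,2,3,4]) qs. (p x)^2)"
  proof
    fix x :: "nat \<Rightarrow> real"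
    have "(\<Sum>p\<leftarrow>pairwise_products (vars [1,2,3,4]) qs. (p x)^2) =
        (x 1^2 + x 2^2 + x 3^2 + x 4^2) * ((x 4)^2 * ((x 1^2 + x 2^2 + x 3^2)
          * choi_lam (x 1) (x 2) (x 3)) + (x 1^2 + x 2^2 + x 3^2) * (x 3^4)^2)"
      by (simp add: qs_def sum_squares_pairwise_products sum_squares_vars sum_squares_choi_lam_sos add.assoc)
    also have "\<dots> = H1 x * f1 x" unfolding H1_def f1_eq by algebra
    finally show "H1 x * f1 x = (\<Sum>p\<leftarrow>pairwise_products (vars [1,2,3,4]) qs. (p x)^2)" ..
  qed
qed

lemma H2_f2_sos: "sos_deg_in {1,2,3,5} 6 (\<lambda>x. H2 x * f2 x)"
proof (rule sos_deg_in_of_list)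
  define ps where "ps = pairwise_products (vars [1,2,3,5])
    (pairwise_products (vars [1,2,3]) [\<lambda>x. x 1 * x 2 * x 3 * x 5])"
  have monomial: "\<forall>p\<in>set [\<lambda>x. x 1 * x 2 * x 3 * x 5]. poly_degs_in {1,2,3,5} {4} p"
    by simp (rule poly_degs_in_intros | simp)+
  have products: "\<forall>q\<in>set (pairwise_products (vars [1,2,3]) [\<lambda>x. x 1 * x 2 * x 3 * x 5]).
      poly_degs_in {1,2,3,5} {5} q"
    by (rule poly_degs_in_pairwise_products[OF poly_degs_in_vars monomial]) auto
  show "\<forall>p\<in>set ps. poly_degs_in {1,2,3,5} {6} p"
    unfolding ps_def by (rule poly_degs_in_pairwise_products[OF poly_degs_in_vars products]) auto
  show "\<forall>x. H2 x * f2 x = (\<Sum>p\<leftarrow>ps. (p x)^2)"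
  proof
    fix x :: "nat \<Rightarrow> real"
    have "(\<Sum>p\<leftarrow>ps. (p x)^2) =
        (x 1^2 + x 2^2 + x 3^2 + x 5^2) * ((x 1^2 + x 2^2 + x 3^2) * (x 1 * x 2 * x 3 * x 5)^2)"
      by (simp add: ps_def sum_squares_pairwise_products sum_squares_vars add.assoc)
    also have "\<dots> = H2 x * f2 x" unfolding H2_def f2_def by algebra
    finally show "H2 x * f2 x = (\<Sum>p\<leftarrow>ps. (p x)^2)" ..
  qed
qed

theorem mainTheorem8:
  shows "(form_of_degree {1..5} 8 f \<and> nonneg_form f \<and> \<not> pos_def_form {1..5} f)
       \<and> \<not> (\<exists>\<sigma>1 \<sigma>2. sos_in {1,2,3,4} \<sigma>1 \<and> sos_in {1,2,3,5} \<sigma>2 \<and> (\<forall>x. f x = \<sigma>1 x + \<sigma>2 x))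
       \<and> (\<exists>\<sigma>1 \<sigma>2. sos_deg_in {1,2,3,4} 6 \<sigma>1 \<and> sos_deg_in {1,2,3,5} 6 \<sigma>2 \<and>
            (\<forall>x. H1 x \<noteq> 0 \<and> H2 x \<noteq> 0 \<longrightarrow> f x = \<sigma>1 x / H1 x + \<sigma>2 x / H2 x))"
proof (intro conjI)
  show "form_of_degree {1..5} 8 f" "nonneg_form f" "\<not> pos_def_form {1..5} f"
    using f_nonneg_form_not_pos_def by auto
  show "\<not> (\<exists>\<sigma>1 \<sigma>2. sos_in {1,2,3,4} \<sigma>1 \<and> sos_in {1,2,3,5} \<sigma>2 \<and> (\<forall>x. f x = \<sigma>1 x + \<sigma>2 x))"
    by (rule f_not_sum_of_clique_sos)
  have decomposition:
    "\<forall>x. H1 x \<noteq> 0 \<and> H2 x \<noteq> 0 \<longrightarrow> f x = H1 x * f1 x / H1 x + H2 x * f2 x / H2 x"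
    by (simp add: f_def)
  show "\<exists>\<sigma>1 \<sigma>2. sos_deg_in {1,2,3,4} 6 \<sigma>1 \<and> sos_deg_in {1,2,3,5} 6 \<sigma>2 \<and>
      (\<forall>x. H1 x \<noteq> 0 \<and> H2 x \<noteq> 0 \<longrightarrow> f x = \<sigma>1 x / H1 x + \<sigma>2 x / H2 x)"
    by (intro exI[of _ "\<lambda>x. H1 x * f1 x"] exI[of _ "\<lambda>x. H2 x * f2 x"] conjI
        H1_f1_sos H2_f2_sos decomposition)
qed

end
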